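(* Let $n\ge1$, $t\in\mathbb{C}^{N_n}\setminus\{0\}$, and write $f_t=\sum_{k=0}^{n-1}x_k^{s_k}+\sum_jT_j(x_n)x_0^{j_0}\cdots x_{n-1}^{j_{n-1}}$ as in the context. For every $c\in\mathbb{C}$, with $\ell=x_n-c$, one has $\min_{j:\,T_j\not\equiv0}\overline{\mathrm{val}}_\ell(T_j)\le1$; and equality holds (for some $c$) if and only if the point $[t]\in\mathcal{E}_n$ lies in the boundary $\partial\mathcal{E}_n$.
   Context: Sylvester numbers: $s_0=2$, $s_{k+1}=1+\prod_{i=0}^ks_i$. For $m\ge0$: $d_m=\prod_{k=0}^ms_k$, $d_{m,k}=d_m/s_k$, $w^{(m)}(i)=d_m-\sum_{k=0}^mi_kd_{m,k}$; $I_m$ = tuples $(i_0,\dots,i_m)$ with $0\le i_k\le s_k-2$ and $w^{(m)}(i)>0$, $N_m=|I_m|$. For $t\in\mathbb{C}^{N_m}$: $F_t=\sum_{k=0}^mx_k^{s_k}+\sum_{i\in I_m}t_ix^ix_{m+1}^{w^{(m)}(i)}$ in the weighted polynomial ring with weights $d_{m,0},\dots,d_{m,m},1$, and $f_t=F_t|_{x_{m+1}=1}$. $\mathcal{E}_m=[(\mathbb{C}^{N_m}\setminus0)/\mathbb{C}^*]$ with $\lambda\cdot t=(\lambda^{w^{(m)}(i)}t_i)$. Boundary: for $t'\in\mathbb{C}^{N_{n-1}}\setminus0$ put $\ell'=x_n-\frac1{s_n}t'_{(0,\dots,0)}x_{n+1}^{d_{n-1}}$; then $\sum_{k<n}x_k^{s_k}+\sum_{j\in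 I_{n-1}}t'_jx_0^{j_0}\cdots x_{n-1}^{j_{n-1}}\ell'^{\,w^{(n-1)}(j)}x_{n+1}^{w^{(n-1)}(j)}+\ell'^{\,s_n}=F_t$ for a unique $t\in\mathbb{C}^{N_n}$, and $\partial\mathcal{E}_n$ is the image of the induced map $\mathcal{E}_{n-1}\to\mathcal{E}_n$. Decomposition: collecting powers of $x_n$, $f_t=\sum_{k<n}x_k^{s_k}+\sum_jT_j(x_n)x_0^{j_0}\cdots x_{n-1}^{j_{n-1}}$ with $j=(j_0,\dots,j_{n-1})$, $0\le j_k\le s_k-2$, $T_j\in\mathbb{C}[x_n]$. For $\ell=x_n-c$: $\mathrm{val}_\ell(T_j)$ = largest power of $\ell$ dividing $T_j$, and $\overline{\mathrm{val}}_\ell(T_j)=\mathrm{val}_\ell(T_j)/w^{(n-1)}(j)$. *)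

theory Defs
  imports Complex_Main "HOL-Library.Poly_Mapping" "HOL-Computational_Algebra.Polynomial"
begin

fun sylv :: "nat \<Rightarrow> nat" where
  "sylv 0 = 2"
| "sylv (Suc k) = 1 + (\<Prod>i\<le>k. sylv i)"

definition dd :: "nat \<Rightarrow> nat" where
  "dd m = (\<Prod>k\<le>m. sylv k)"

definition ddk :: "nat \<Rightarrow> nat \<Rightarrow> nat" where
  "ddk m k = dd m div sylv k"

text \<open>Tuples (i_0,...,i_m) are represented as lists of length m+1.\<close>
definition wt :: "nat \<Rightarrow> nat list \<Rightarrow> int" where
  "wt m i = int (dd m) - (\<Sum>k\<le>m. int (i ! k) * int (ddk m k))"

definition Iset :: "nat \<Rightarrow> nat list set" where
  "Iset m = {i. length i = m + 1 \<and> (\<forall>k\<le>m. i ! k \<le> sylv k - 2) \<and> wt m i > 0}"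

text \<open>A point t of C^{N_m} is a function on tuples, vanishing off I_m.\<close>
definition param :: "nat \<Rightarrow> (nat list \<Rightarrow> complex) \<Rightarrow> bool" where
  "param m t \<longleftrightarrow> (\<forall>i. i \<notin> Iset m \<longrightarrow> t i = 0)"

definition nonzero_param :: "nat \<Rightarrow> (nat list \<Rightarrow> complex) \<Rightarrow> bool" where
  "nonzero_param m t \<longleftrightarrow> param m t \<and> (\<exists>i\<in>Iset m. t i \<noteq> 0)"

definition scale :: "nat \<Rightarrow> complex \<Rightarrow> (nat list \<Rightarrow> complex) \<Rightarrow> (nat list \<Rightarrow> complex)" where
  "scale m a t = (\<lambda>i. a ^ nat (wt m i) * t i)"

type_synonym mpoly = "(nat \<Rightarrow>\<^sub>0 nat) \<Rightarrow>\<^sub>0 complex"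

definition Var :: "nat \<Rightarrow> mpoly" where
  "Var k = Poly_Mapping.single (Poly_Mapping.single k 1) 1"

definition Const :: "complex \<Rightarrow> mpoly" where
  "Const c = Poly_Mapping.single 0 c"

definition FF :: "nat \<Rightarrow> (nat list \<Rightarrow> complex) \<Rightarrow> mpoly" where
  "FF m t = (\<Sum>k\<le>m. Var k ^ sylv k)
     + (\<Sum>i\<in>Iset m. Const (t i) * (\<Prod>k\<le>m. Var k ^ (i ! k)) * Var (Suc m) ^ nat (wt m i))"

definition ff :: "nat \<Rightarrow> (nat list \<Rightarrow> complex) \<Rightarrow> mpoly" where
  "ff m t = (\<Sum>k\<le>m. Var k ^ sylv k)
     + (\<Sum>i\<in>Iset m. Const (t i) * (\<Prod>k\<le>m. Var k ^ (i ! k)))"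

text \<open>The identity defining the map E_{n-1} -> E_n, t' |-> t (here called u).\<close>
definition bdry_identity :: "nat \<Rightarrow> (nat list \<Rightarrow> complex) \<Rightarrow> (nat list \<Rightarrow> complex) \<Rightarrow> bool" where
  "bdry_identity n t' u \<longleftrightarrow>
    (let lin = Var n - Const (t' (replicate n 0) / of_nat (sylv n)) * Var (Suc n) ^ dd (n - 1) in
      (\<Sum>k<n. Var k ^ sylv k)
      + (\<Sum>j\<in>Iset (n - 1). Const (t' j) * (\<Prod>k<n. Var k ^ (j ! k))
            * lin ^ nat (wt (n - 1) j) * Var (Suc n) ^ nat (wt (n - 1) j))
      + lin ^ sylv n
      = FF n u)"

text \<open>[t] lies in the image of E_{n-1} -> E_n.\<close>
definition in_boundary :: "nat \<Rightarrow> (nat list \<Rightarrow> complex) \<Rightarrow> bool" where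
  "in_boundary n t \<longleftrightarrow>
    (\<exists>t' u a. nonzero_param (n - 1) t' \<and> param n u \<and> bdry_identity n t' u
              \<and> a \<noteq> 0 \<and> t = scale n a u)"

definition Jset :: "nat \<Rightarrow> nat list set" where
  "Jset n = {j. length j = n \<and> (\<forall>k<n. j ! k \<le> sylv k - 2)}"

definition expo :: "nat \<Rightarrow> nat list \<Rightarrow> nat \<Rightarrow> (nat \<Rightarrow>\<^sub>0 nat)" where
  "expo n j a = (\<Sum>k<n. Poly_Mapping.single k (j ! k)) + Poly_Mapping.single n a"

text \<open>T_j(x_n): collect the coefficients of x^j x_n^a in f_t (x_n-degree of f_t is at most s_n).\<close>
definition TT :: "nat \<Rightarrow> (nat list \<Rightarrow> complex) \<Rightarrow> nat list \<Rightarrow> complex poly" where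
  "TT n t j = Poly (map (\<lambda>a. Poly_Mapping.lookup (ff n t) (expo n j a)) [0..<sylv n + 1])"

text \<open>val_ell(T_j) with ell = x_n - c is the root multiplicity of c; normalized valuation.\<close>
definition valbar :: "nat \<Rightarrow> (nat list \<Rightarrow> complex) \<Rightarrow> complex \<Rightarrow> nat list \<Rightarrow> real" where
  "valbar n t c j = real (order c (TT n t j)) / real_of_int (wt (n - 1) j)"

definition minvalbar :: "nat \<Rightarrow> (nat list \<Rightarrow> complex) \<Rightarrow> complex \<Rightarrow> real" where
  "minvalbar n t c = Min {valbar n t c j | j. j \<in> Jset n \<and> TT n t j \<noteq> 0}"

end

theory Submission
  imports Defs
begin

(*
  Let n = m + 1, l = x_n - c and w_j = w^(m)(j). For j != 0 the polynomial T_j has degree at most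
  w_j, while T_0 is monic of degree s_n = d_m + 1 without x_n^(d_m) term. If every nonzero T_j had
  order greater than w_j at c, then T_j = 0 for j != 0 and T_0 = l^(s_n), so c = 0 and t = 0; hence
  the minimum is at most 1. It equals 1 iff l^(w_j) divides every T_j, which by the same degree
  bounds means T_j = t'_j l^(w_j) for j != 0 and T_0 = l^(s_n) + s_n c l^(d_m). Both sides of the
  boundary identity are weighted homogeneous, hence determined by their T_j, and expanding the left
  side shows that the identity says exactly this, with c = t'_0 / s_n; the C^*-action merely
  rescales c by lambda^(d_m).
*)

section \<open>Sylvester numbers and weights\<close>

lemma sylv_pos: "0 < sylv k"
  by (cases k) simp_all

lemma dd_pos: "0 < dd m"
  unfolding dd_def using sylv_pos by (simp add: prod_pos)

lemma sylv_Suc: "sylv (Suc m) = dd m + 1"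
  by (simp add: dd_def)

declare sylv.simps(2) [simp del]

lemma sylv_ge_2: "2 \<le> sylv k"
  using dd_pos by (cases k) (simp_all add: sylv_Suc Suc_le_eq)

lemma dd_Suc: "dd (Suc m) = dd m * sylv (Suc m)"
  by (simp add: dd_def atMost_Suc)

lemma sylv_dvd_dd: "k \<le> m \<Longrightarrow> sylv k dvd dd m"
  unfolding dd_def by (rule dvd_prodI) auto

lemma ddk_pos: "k \<le> m \<Longrightarrow> 0 < ddk m k"
  unfolding ddk_def using sylv_dvd_dd dd_pos sylv_pos
  by (metis dvd_div_mult_self gr0I mult_is_0)

lemma ddk_Suc: "k \<le> m \<Longrightarrow> ddk (Suc m) k = ddk m k * sylv (Suc m)"
  unfolding ddk_def dd_Suc using sylv_dvd_dd by (metis div_mult_swap mult.commute)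

lemma ddk_Suc_self: "ddk (Suc m) (Suc m) = dd m"
  unfolding ddk_def dd_Suc using sylv_pos by simp

abbreviation zeros :: "nat \<Rightarrow> nat list" where
  "zeros n \<equiv> replicate n 0"

declare replicate_Suc [simp del] \<comment> \<open>keeps \<open>zeros (Suc m)\<close> folded\<close>

lemma wt_le_dd: "wt m i \<le> int (dd m)"
  unfolding wt_def by (simp add: sum_nonneg)

lemma wt_zeros: "wt m (zeros (Suc m)) = int (dd m)"
  unfolding wt_def by simp

lemma wt_less_dd:
  assumes "length j = Suc m" "j \<noteq> zeros (Suc m)"
  shows "wt m j < int (dd m)"
proof -
  obtain k where k: "k \<le> m" "j ! k \<noteq> 0"
    using assms by (metis in_set_conv_nth less_Suc_eq_le replicate_eqI)
  have "0 < int (j ! k) * int (ddk m k)"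
    using k ddk_pos by simp
  also have "\<dots> \<le> (\<Sum>k\<le>m. int (j ! k) * int (ddk m k))"
    using k by (intro member_le_sum) auto
  finally show ?thesis
    unfolding wt_def by simp
qed

lemma wt_snoc:
  assumes "length j = Suc m"
  shows "wt (Suc m) (j @ [a]) = wt m j + int (dd m) * (wt m j - int a)"
proof -
  have "(\<Sum>k\<le>Suc m. int ((j @ [a]) ! k) * int (ddk (Suc m) k))
      = (\<Sum>k\<le>m. int (j ! k) * int (ddk m k)) * int (sylv (Suc m)) + int a * int (dd m)"
    using assms by (simp add: ddk_Suc ddk_Suc_self nth_append sum_distrib_right mult.assoc)
  then show ?thesis
    unfolding wt_def by (simp add: dd_Suc sylv_Suc algebra_simps)
qed

lemma wt_zeros_snoc_sylv: "wt n (zeros n @ [sylv n]) = 0"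
proof -
  have "wt n (zeros n @ [sylv n]) = int (dd n) - int (sylv n) * int (ddk n n)"
    unfolding wt_def by (simp add: lessThan_Suc_atMost[symmetric] nth_append)
  then show ?thesis
    unfolding ddk_def using sylv_dvd_dd[of n n] by (simp flip: of_nat_mult)
qed

lemma Iset_iff: "j \<in> Iset m \<longleftrightarrow> j \<in> Jset (Suc m) \<and> 0 < wt m j"
  unfolding Iset_def Jset_def by (auto simp: less_Suc_eq_le)

lemma length_Jset: "j \<in> Jset n \<Longrightarrow> length j = n"
  unfolding Jset_def by simp

lemma length_Iset: "j \<in> Iset m \<Longrightarrow> length j = Suc m"
  unfolding Iset_def by simp

lemma zeros_in_Jset: "zeros n \<in> Jset n"
  unfolding Jset_def by simp

lemma zeros_in_Iset: "zeros (Suc m) \<in> Iset m"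
  unfolding Iset_iff using zeros_in_Jset wt_zeros dd_pos by simp

lemma snoc_in_Jset_iff:
  "length j = n \<Longrightarrow> j @ [a] \<in> Jset (Suc n) \<longleftrightarrow> j \<in> Jset n \<and> a \<le> sylv n - 2"
  unfolding Jset_def by (auto simp: nth_append less_Suc_eq)

lemma Iset_butlast_last:
  assumes "i \<in> Iset n"
  shows "i = butlast i @ [last i]" "butlast i \<in> Jset n" "last i \<le> sylv n - 2"
proof -
  show i: "i = butlast i @ [last i]"
    using length_Iset[OF assms] by (cases i rule: rev_cases) auto
  have "length (butlast i) = n"
    using length_Iset[OF assms] by simp
  then show "butlast i \<in> Jset n" "last i \<le> sylv n - 2"
    using assms Iset_iff snoc_in_Jset_iff i by metis+
qed

lemma snoc_in_Iset_iff:
  assumes "length j = Suc m"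
  shows "j @ [a] \<in> Iset (Suc m) \<longleftrightarrow>
    j \<in> Iset m \<and> (if j = zeros (Suc m) then a \<le> sylv (Suc m) - 2 else int a \<le> wt m j)"
proof -
  let ?w = "wt m j" and ?d = "int (dd m)"
  \<comment> \<open>by \<open>wt_snoc\<close> the new weight is \<open>w + d (w - a)\<close>, and \<open>w \<le> d\<close>\<close>
  have wt_pos_iff: "0 < wt (Suc m) (j @ [a]) \<longleftrightarrow> 0 < ?w \<and> int a \<le> ?w"
  proof
    assume pos: "0 < wt (Suc m) (j @ [a])"
    have "?d * (?w - a) \<le> 0" if "?w \<le> 0"
      using that by (simp add: mult_nonneg_nonpos)
    moreover have "?d * (?w - a) \<le> ?d * (- 1)" if "?w < a"
      using that by (intro mult_left_mono) auto
    ultimately show "0 < ?w \<and> int a \<le> ?w"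
      using pos wt_le_dd[of m j] unfolding wt_snoc[OF assms] by force
  qed (auto simp: wt_snoc[OF assms] intro: add_pos_nonneg)
  have "a \<le> sylv (Suc m) - 2" if "int a \<le> ?w" "j \<noteq> zeros (Suc m)"
    using that wt_less_dd[OF assms] by (simp add: sylv_Suc)
  moreover have "int a \<le> ?w" if "a \<le> sylv (Suc m) - 2" "j = zeros (Suc m)"
    using that wt_zeros[of m] by (simp add: sylv_Suc)
  moreover have "j @ [a] \<in> Iset (Suc m) \<longleftrightarrow>
      j \<in> Jset (Suc m) \<and> a \<le> sylv (Suc m) - 2 \<and> 0 < ?w \<and> int a \<le> ?w"
    unfolding Iset_iff[of "j @ [a]"] snoc_in_Jset_iff[OF assms] wt_pos_iff by blast
  ultimately show ?thesis
    unfolding Iset_iff by auto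
qed

lemma nat_wt_snoc:
  assumes "j \<in> Iset m" "a \<le> nat (wt m j)"
  shows "nat (wt (Suc m) (j @ [a])) = nat (wt m j) + dd m * (nat (wt m j) - a)"
proof -
  have "wt (Suc m) (j @ [a]) = int (nat (wt m j) + dd m * (nat (wt m j) - a))"
    using assms wt_snoc[OF length_Iset[OF assms(1)]] by (simp add: Iset_iff of_nat_diff)
  then show ?thesis
    by (simp only: nat_int)
qed

lemma nat_wt_zeros_snoc:
  assumes "a \<le> sylv (Suc m)"
  shows "nat (wt (Suc m) (zeros (Suc m) @ [a])) = dd m * (sylv (Suc m) - a)"
proof -
  have "wt (Suc m) (zeros (Suc m) @ [a]) = int (dd m) * (int (sylv (Suc m)) - int a)"
    by (simp add: wt_snoc wt_zeros sylv_Suc algebra_simps)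
  also have "\<dots> = int (dd m * (sylv (Suc m) - a))"
    using assms by (simp add: of_nat_diff)
  finally have "wt (Suc m) (zeros (Suc m) @ [a]) = int (dd m * (sylv (Suc m) - a))" .
  then show ?thesis
    by (simp only: nat_int)
qed

lemma finite_Jset: "finite (Jset n)"
proof (rule finite_subset)
  show "Jset n \<subseteq> {j. set j \<subseteq> {..\<Sum>k<n. sylv k} \<and> length j = n}"
  proof
    fix j assume j: "j \<in> Jset n"
    have "j ! k \<le> (\<Sum>k<n. sylv k)" if "k < n" for k
      using j that member_le_sum[of k "{..<n}" sylv] unfolding Jset_def by fastforce
    then show "j \<in> {j. set j \<subseteq> {..\<Sum>k<n. sylv k} \<and> length j = n}"
      using length_Jset[OF j] by (auto simp: in_set_conv_nth)
  qed
qed (simp add: finite_lists_length_eq)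

lemma finite_Iset: "finite (Iset m)"
  using finite_subset[OF _ finite_Jset] Iset_iff by blast

section \<open>Powers of a linear polynomial\<close>

lemma coeff_linear_power_below_top:
  "coeff ([:-c, 1:] ^ Suc d) d = - (of_nat (Suc d) * c :: 'a::comm_ring_1)"
  using coeff_linear_poly_power[of d "Suc d" "-c" 1] by simp

lemma eq_smult_linear_power_if_dvd:
  fixes p :: "'a::idom poly"
  assumes "[:-c, 1:] ^ w dvd p" "degree p \<le> w"
  shows "p = smult (coeff p w) ([:-c, 1:] ^ w)"
proof -
  obtain q where q: "p = [:-c, 1:] ^ w * q"
    using assms(1) by (elim dvdE)
  show ?thesis
  proof (cases "q = 0")
    case False
    then have "degree q = 0"
      using assms(2) q by (simp add: degree_mult_eq degree_linear_power)
    then obtain k where "q = [:k:]"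
      by (metis degree_0_id)
    then show ?thesis
      using q by (simp add: coeff_linear_power)
  qed (simp add: q)
qed

lemma eq_linear_power_if_dvd_monic:
  fixes p :: "'a::idom poly"
  assumes "[:-c, 1:] ^ d dvd p" "degree p = Suc d" "coeff p (Suc d) = 1" "coeff p d = 0"
  shows "p = [:-c, 1:] ^ Suc d + smult (of_nat (Suc d) * c) ([:-c, 1:] ^ d)"
proof -
  let ?r = "p - [:-c, 1:] ^ Suc d"
  have "[:-c, 1:] ^ d dvd ?r"
    using assms(1) by (intro dvd_diff le_imp_power_dvd) simp_all
  moreover have "degree ?r \<le> d"
  proof (rule degree_le, intro allI impI)
    fix i assume "d < i"
    then consider "i = Suc d" | "Suc d < i"
      by linarith
    then show "coeff ?r i = 0"
      by cases (use assms(2,3) in \<open>simp_all add: coeff_linear_power coeff_eq_0 degree_linear_power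
          del: power_Suc\<close>)
  qed
  ultimately have "?r = smult (coeff ?r d) ([:-c, 1:] ^ d)"
    by (rule eq_smult_linear_power_if_dvd)
  moreover have "coeff ?r d = of_nat (Suc d) * c"
    using assms(4) coeff_linear_power_below_top[of c d] by (simp del: power_Suc)
  ultimately show ?thesis
    by (simp add: diff_eq_eq add.commute del: power_Suc)
qed

lemma coeff_linear_power_scale:
  "coeff ([:-(z ^ D * c), 1:] ^ w) a = z ^ (D * (w - a)) * coeff ([:-c, 1:] ^ w) (a::nat)"
  for z c :: "'a::comm_ring_1"
proof (cases "a \<le> w")
  case True
  have "-(z ^ D * c) = z ^ D * (-c)"
    by simp
  then have "(-(z ^ D * c)) ^ (w - a) = z ^ (D * (w - a)) * (-c) ^ (w - a)"
    by (simp only: power_mult power_mult_distrib)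
  then show ?thesis
    using True by (simp add: coeff_linear_poly_power)
qed (simp add: coeff_eq_0 degree_linear_power)

section \<open>Monomials\<close>

lemma Var_power: "Var k ^ e = Poly_Mapping.single (Poly_Mapping.single k e) 1"
  unfolding Var_def by (induction e) (simp_all add: mult_single single_add[symmetric] add.commute)

lemma prod_Var_power:
  "finite A \<Longrightarrow> (\<Prod>k\<in>A. Var k ^ f k) = Poly_Mapping.single (\<Sum>k\<in>A. Poly_Mapping.single k (f k)) 1"
  by (induction A rule: finite_induct) (simp_all add: Var_power mult_single)

lemma Const_mult_single: "Const z * Poly_Mapping.single v w = Poly_Mapping.single v (z * w)"
  unfolding Const_def by (simp add: mult_single)

definition hexpo :: "nat \<Rightarrow> nat list \<Rightarrow> nat \<Rightarrow> nat \<Rightarrow> (nat \<Rightarrow>\<^sub>0 nat)" where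
  "hexpo n j a b = expo n j a + Poly_Mapping.single (Suc n) b"

lemma lookup_hexpo:
  "Poly_Mapping.lookup (hexpo n j a b) v = (if v < n then j ! v else if v = n then a else if v = Suc n then b else 0)"
  unfolding hexpo_def expo_def by (simp add: lookup_add lookup_sum lookup_single when_def)

lemma hexpo_0: "hexpo n j a 0 = expo n j a"
  unfolding hexpo_def by simp

lemma hexpo_eq_iff:
  assumes "length j = n" "length j' = n"
  shows "hexpo n j a b = hexpo n j' a' b' \<longleftrightarrow> j = j' \<and> a = a' \<and> b = b'"
proof
  assume "hexpo n j a b = hexpo n j' a' b'"
  then have lookup_eq: "Poly_Mapping.lookup (hexpo n j a b) v = Poly_Mapping.lookup (hexpo n j' a' b') v" for v
    by simp
  have "j ! v = j' ! v" if "v < n" for v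
    using lookup_eq[of v] that by (simp add: lookup_hexpo)
  moreover have "a = a'" "b = b'"
    using lookup_eq[of n] lookup_eq[of "Suc n"] by (simp_all add: lookup_hexpo)
  ultimately show "j = j' \<and> a = a' \<and> b = b'"
    using assms by (simp add: nth_equalityI)
qed simp

lemma sum_single_nth_eq_hexpo:
  assumes "length i = Suc n"
  shows "(\<Sum>k\<le>n. Poly_Mapping.single k (i ! k)) = hexpo n (butlast i) (last i) 0"
proof -
  have "i ! n = last i"
    using assms last_conv_nth[of i] by fastforce
  then show ?thesis
    using assms by (intro poly_mapping_eqI) (auto simp: lookup_sum lookup_single when_def lookup_hexpo nth_butlast)
qed

section \<open>The polynomials T_j\<close>

lemma single_sylv_eq_expo_iff:
  assumes "j \<in> Jset n" "k \<le> n"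
  shows "Poly_Mapping.single k (sylv k) = expo n j a \<longleftrightarrow> k = n \<and> j = zeros n \<and> a = sylv n"
proof
  assume eq: "Poly_Mapping.single k (sylv k) = expo n j a"
  have lookup_eq: "Poly_Mapping.lookup (Poly_Mapping.single k (sylv k)) v = Poly_Mapping.lookup (hexpo n j a 0) v" for v
    by (simp add: eq hexpo_0)
  have "k = n"
  proof (rule ccontr)
    assume "k \<noteq> n"
    then have "sylv k = j ! k"
      using assms(2) lookup_eq[of k] by (simp add: lookup_hexpo)
    moreover have "j ! k \<le> sylv k - 2"
      using assms \<open>k \<noteq> n\<close> unfolding Jset_def by simp
    ultimately show False
      using sylv_ge_2[of k] by linarith
  qed
  moreover have "j = zeros n"
  proof -
    have "j ! v = 0" if "v < n" for v
      using lookup_eq[of v] \<open>k = n\<close> that by (simp add: lookup_hexpo lookup_single)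
    then show ?thesis
      using length_Jset[OF assms(1)] by (simp add: list_eq_iff_nth_eq)
  qed
  moreover have "a = sylv n"
    using lookup_eq[of n] \<open>k = n\<close> by (simp add: lookup_hexpo)
  ultimately show "k = n \<and> j = zeros n \<and> a = sylv n"
    by blast
qed (auto intro!: poly_mapping_eqI simp: expo_def lookup_add lookup_sum lookup_single when_def)

lemma lookup_ff_expo:
  assumes "j \<in> Jset n"
  shows "Poly_Mapping.lookup (ff n t) (expo n j a) =
    (if j @ [a] \<in> Iset n then t (j @ [a]) else 0) + (if j = zeros n \<and> a = sylv n then 1 else 0)"
proof -
  have "Poly_Mapping.lookup (Var k ^ sylv k) (expo n j a) = (if k = n then (if j = zeros n \<and> a = sylv n then 1 else 0) else 0)"
    if "k \<le> n" for k
    using single_sylv_eq_expo_iff[OF assms that] by (simp add: Var_power lookup_single when_def)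
  moreover have "Poly_Mapping.lookup (Const (t i) * (\<Prod>k\<le>n. Var k ^ (i ! k))) (expo n j a) =
      (if i = j @ [a] then t i else 0)" if "i \<in> Iset n" for i
  proof -
    have "butlast i = j \<and> last i = a \<longleftrightarrow> i = j @ [a]"
      using length_Iset[OF that] by (cases i rule: rev_cases) auto
    then show ?thesis
      using length_Iset[OF that] length_Jset[OF assms]
      by (simp add: prod_Var_power Const_mult_single sum_single_nth_eq_hexpo lookup_single when_def
          hexpo_eq_iff flip: hexpo_0)
  qed
  ultimately show ?thesis
    unfolding ff_def lookup_add lookup_sum using finite_Iset by (simp add: sum.If_cases)
qed

lemma coeff_TT:
  assumes "j \<in> Jset n"
  shows "coeff (TT n t j) a =
    (if j @ [a] \<in> Iset n then t (j @ [a]) else 0) + (if j = zeros n \<and> a = sylv n then 1 else 0)"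
proof (cases "a \<le> sylv n")
  case True
  then show ?thesis
    unfolding TT_def by (simp add: nth_default_def lookup_ff_expo[OF assms] less_Suc_eq_le del: upt_Suc)
next
  case False
  then have "j @ [a] \<notin> Iset n"
    using snoc_in_Jset_iff[OF length_Jset[OF assms]] Iset_iff by auto
  then show ?thesis
    using False unfolding TT_def by (simp add: nth_default_def del: upt_Suc)
qed

lemma degree_TT_le: "degree (TT n t j) \<le> sylv n"
  unfolding TT_def by (rule degree_le) (simp add: nth_default_def del: upt_Suc)

lemma coeff_TT_snoc:
  assumes "j @ [a] \<in> Iset n"
  shows "coeff (TT n t j) a = t (j @ [a])"
proof -
  have "j \<in> Jset n" "a \<le> sylv n - 2"
    using assms length_Iset[OF assms] snoc_in_Jset_iff[of j n a] Iset_iff by auto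
  moreover have "a \<noteq> sylv n"
    using \<open>a \<le> sylv n - 2\<close> sylv_ge_2[of n] by linarith
  ultimately show ?thesis
    using assms by (simp add: coeff_TT)
qed

lemma coeff_TT_scale:
  "j \<in> Jset n \<Longrightarrow> coeff (TT n (scale n z u) j) a = z ^ nat (wt n (j @ [a])) * coeff (TT n u j) a"
  using wt_zeros_snoc_sylv by (auto simp: coeff_TT scale_def)

lemma param_eq_0_if_coeffs_TT_vanish:
  assumes "param n t" "\<And>j a. j \<in> Jset n \<Longrightarrow> a < sylv n \<Longrightarrow> coeff (TT n t j) a = 0"
  shows "t i = 0"
proof (cases "i \<in> Iset n")
  case True
  have "last i < sylv n"
    using Iset_butlast_last(3)[OF True] sylv_ge_2[of n] by linarith
  then show ?thesis
    using assms(2) Iset_butlast_last[OF True] coeff_TT_snoc[of "butlast i" "last i"] True by metis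
qed (use assms(1) param_def in blast)

lemma TT_eq_0_if_notin_Iset:
  assumes "j \<in> Jset (Suc m)" "j \<notin> Iset m"
  shows "TT (Suc m) t j = 0"
proof -
  have "j @ [a] \<notin> Iset (Suc m)" for a
    using assms snoc_in_Iset_iff[OF length_Jset[OF assms(1)]] by blast
  moreover have "j \<noteq> zeros (Suc m)"
    using assms(2) zeros_in_Iset by blast
  ultimately show ?thesis
    by (intro poly_eqI) (simp add: coeff_TT[OF assms(1)])
qed

lemma degree_TT_le_wt:
  assumes "j \<in> Iset m" "j \<noteq> zeros (Suc m)"
  shows "degree (TT (Suc m) t j) \<le> nat (wt m j)"
proof (rule degree_le, intro allI impI)
  fix a assume "nat (wt m j) < a"
  then have "j @ [a] \<notin> Iset (Suc m)"
    using assms snoc_in_Iset_iff[OF length_Iset[OF assms(1)]] by auto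
  moreover have "j \<in> Jset (Suc m)"
    using assms(1) Iset_iff by blast
  ultimately show "coeff (TT (Suc m) t j) a = 0"
    using assms(2) by (simp add: coeff_TT)
qed

lemma coeff_TT_zeros:
  "coeff (TT (Suc m) t (zeros (Suc m))) a =
    (if a \<le> sylv (Suc m) - 2 then t (zeros (Suc m) @ [a]) else 0) + (if a = sylv (Suc m) then 1 else 0)"
  using coeff_TT[OF zeros_in_Jset, of "Suc m" t a] snoc_in_Iset_iff[of "zeros (Suc m)" m a] zeros_in_Iset
  by simp

lemma TT_zeros_monic:
  "degree (TT (Suc m) t (zeros (Suc m))) = sylv (Suc m)"
  "coeff (TT (Suc m) t (zeros (Suc m))) (sylv (Suc m)) = 1"
  "coeff (TT (Suc m) t (zeros (Suc m))) (dd m) = 0"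
proof -
  show top: "coeff (TT (Suc m) t (zeros (Suc m))) (sylv (Suc m)) = 1"
    using sylv_ge_2[of "Suc m"] by (simp add: coeff_TT_zeros)
  show "degree (TT (Suc m) t (zeros (Suc m))) = sylv (Suc m)"
    using degree_TT_le top by (intro antisym le_degree) auto
  show "coeff (TT (Suc m) t (zeros (Suc m))) (dd m) = 0"
    using dd_pos[of m] by (simp add: coeff_TT_zeros sylv_Suc)
qed

section \<open>Normalized valuations\<close>

lemma minvalbar_eq_Min:
  "minvalbar (Suc m) t c = Min (valbar (Suc m) t c ` {j \<in> Iset m. TT (Suc m) t j \<noteq> 0})"
proof -
  have "j \<in> Jset (Suc m) \<and> TT (Suc m) t j \<noteq> 0 \<longleftrightarrow> j \<in> Iset m \<and> TT (Suc m) t j \<noteq> 0" for j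
    using TT_eq_0_if_notin_Iset Iset_iff by blast
  then have "{valbar (Suc m) t c j |j. j \<in> Jset (Suc m) \<and> TT (Suc m) t j \<noteq> 0} =
      valbar (Suc m) t c ` {j \<in> Iset m. TT (Suc m) t j \<noteq> 0}"
    by blast
  then show ?thesis
    unfolding minvalbar_def by simp
qed

lemma finite_nonzero_TT: "finite {j \<in> Iset m. TT (Suc m) t j \<noteq> 0}"
  using finite_Iset by simp

lemma nonzero_TT_nonempty: "{j \<in> Iset m. TT (Suc m) t j \<noteq> 0} \<noteq> {}"
  using zeros_in_Iset TT_zeros_monic(2)[of m t] by fastforce

lemma valbar_le_1_iff:
  "j \<in> Iset m \<Longrightarrow> valbar (Suc m) t c j \<le> 1 \<longleftrightarrow> order c (TT (Suc m) t j) \<le> nat (wt m j)"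
  unfolding valbar_def Iset_iff by (simp add: divide_le_eq_1) linarith

lemma one_le_valbar_iff:
  "j \<in> Iset m \<Longrightarrow> 1 \<le> valbar (Suc m) t c j \<longleftrightarrow> nat (wt m j) \<le> order c (TT (Suc m) t j)"
  unfolding valbar_def Iset_iff by (simp add: le_divide_eq_1) linarith

lemma minvalbar_le_1_iff:
  "minvalbar (Suc m) t c \<le> 1 \<longleftrightarrow>
    (\<exists>j\<in>Iset m. TT (Suc m) t j \<noteq> 0 \<and> order c (TT (Suc m) t j) \<le> nat (wt m j))"
  unfolding minvalbar_eq_Min using finite_nonzero_TT nonzero_TT_nonempty
  by (auto simp: Min_le_iff valbar_le_1_iff)

lemma one_le_minvalbar_iff:
  "1 \<le> minvalbar (Suc m) t c \<longleftrightarrow> (\<forall>j\<in>Iset m. [:-c, 1:] ^ nat (wt m j) dvd TT (Suc m) t j)"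
  unfolding minvalbar_eq_Min using finite_nonzero_TT nonzero_TT_nonempty
  by (auto simp: Min_ge_iff one_le_valbar_iff order_divides)

lemma minvalbar_le_1:
  assumes "nonzero_param (Suc m) t"
  shows "minvalbar (Suc m) t c \<le> 1"
proof (rule ccontr)
  let ?T = "TT (Suc m) t" and ?z = "zeros (Suc m)" and ?s = "sylv (Suc m)"
  assume "\<not> minvalbar (Suc m) t c \<le> 1"
  then have dvd: "[:-c, 1:] ^ Suc (nat (wt m j)) dvd ?T j" if "j \<in> Iset m" for j
    using that unfolding minvalbar_le_1_iff order_divides by (auto simp: not_le Suc_le_eq)
  have T_vanish: "?T j = 0" if "j \<in> Iset m" "j \<noteq> ?z" for j
  proof (rule ccontr)
    assume "?T j \<noteq> 0"
    then have "Suc (nat (wt m j)) \<le> degree (?T j)"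
      using dvd_imp_degree_le[OF dvd[OF that(1)]] by (simp add: degree_linear_power del: power_Suc)
    then show False
      using degree_TT_le_wt[OF that, of t] by simp
  qed
  have "?T ?z = [:-c, 1:] ^ ?s"
    using eq_smult_linear_power_if_dvd[OF dvd[OF zeros_in_Iset]] TT_zeros_monic[of m t]
    by (simp add: wt_zeros sylv_Suc)
  then have "c = 0"
    using TT_zeros_monic(3)[of m t] coeff_linear_power_below_top[of c "dd m"]
    by (simp add: sylv_Suc del: power_Suc of_nat_Suc)
  have "coeff (?T j) a = 0" if "j \<in> Jset (Suc m)" "a < ?s" for j a
  proof (cases "j \<in> Iset m \<and> j \<noteq> ?z")
    case False
    then show ?thesis
      using that TT_eq_0_if_notin_Iset \<open>?T ?z = [:-c, 1:] ^ ?s\<close> \<open>c = 0\<close>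
      by (auto simp: coeff_linear_poly_power)
  qed (simp add: T_vanish)
  then have "t i = 0" for i
    using assms param_eq_0_if_coeffs_TT_vanish unfolding nonzero_param_def by blast
  then show False
    using assms unfolding nonzero_param_def by blast
qed

section \<open>Weighted homogenization\<close>

text \<open>
  \<open>FF n u\<close> and the left-hand side of \<open>bdry_identity\<close> both have the form
  \<open>(\<Sum>k<n. Var k ^ sylv k) + homog n P\<close>, and \<open>homog n\<close> is injective on families of
  degree at most \<open>sylv n\<close>: the boundary identity is an identity between the \<open>TT n u j\<close>.
\<close>
definition homog :: "nat \<Rightarrow> (nat list \<Rightarrow> complex poly) \<Rightarrow> mpoly" where
  "homog n P = (\<Sum>(j, a) \<in> Jset n \<times> {..sylv n}.
     Poly_Mapping.single (hexpo n j a (nat (wt n (j @ [a])))) (coeff (P j) a))"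

lemma lookup_homog:
  assumes "j \<in> Jset n" "a \<le> sylv n"
  shows "Poly_Mapping.lookup (homog n P) (hexpo n j a b) =
    (if b = nat (wt n (j @ [a])) then coeff (P j) a else 0)"
proof -
  have "Poly_Mapping.lookup (homog n P) (hexpo n j a b) =
      (\<Sum>x \<in> Jset n \<times> {..sylv n}. if x = (j, a) then (if b = nat (wt n (j @ [a])) then coeff (P j) a else 0) else 0)"
    unfolding homog_def lookup_sum
    by (intro sum.cong refl) (auto simp: lookup_single when_def hexpo_eq_iff length_Jset assms(1) split: if_splits)
  also have "\<dots> = (if b = nat (wt n (j @ [a])) then coeff (P j) a else 0)"
    using assms finite_Jset by (simp add: sum.delta)
  finally show ?thesis .
qed

lemma homog_cong: "(\<And>j. j \<in> Jset n \<Longrightarrow> P j = Q j) \<Longrightarrow> homog n P = homog n Q"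
  unfolding homog_def by (intro sum.cong) auto

lemma homog_eqD:
  assumes "homog n P = homog n Q" "j \<in> Jset n" "degree (P j) \<le> sylv n" "degree (Q j) \<le> sylv n"
  shows "P j = Q j"
proof (rule poly_eqI)
  fix a
  show "coeff (P j) a = coeff (Q j) a"
  proof (cases "a \<le> sylv n")
    case True
    then show ?thesis
      using assms(1) lookup_homog[OF assms(2) True, of _ "nat (wt n (j @ [a]))"] by metis
  qed (use assms(3,4) in \<open>simp add: coeff_eq_0\<close>)
qed

lemma homog_add: "homog n (\<lambda>j. P j + Q j) = homog n P + homog n Q"
  unfolding homog_def by (simp add: single_add sum.distrib split_def)

lemma homog_0: "homog n (\<lambda>j. 0) = 0"
  by (simp add: homog_def)

lemma homog_sum: "finite A \<Longrightarrow> homog n (\<lambda>j. \<Sum>i\<in>A. P i j) = (\<Sum>i\<in>A. homog n (P i))"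
  by (induction A rule: finite_induct) (simp_all add: homog_add homog_0)

lemma homog_at:
  assumes "j0 \<in> Jset n"
  shows "homog n (\<lambda>j. if j = j0 then p else 0) =
    (\<Sum>a\<le>sylv n. Poly_Mapping.single (hexpo n j0 a (nat (wt n (j0 @ [a])))) (coeff p a))"
proof -
  have "homog n (\<lambda>j. if j = j0 then p else 0) = (\<Sum>j\<in>Jset n. if j = j0 then
      (\<Sum>a\<le>sylv n. Poly_Mapping.single (hexpo n j a (nat (wt n (j @ [a])))) (coeff p a)) else 0)"
    unfolding homog_def sum.cartesian_product[symmetric] by (intro sum.cong) auto
  then show ?thesis
    using assms finite_Jset by (simp add: sum.delta)
qed

lemma homog_monom:
  assumes "j0 \<in> Jset n" "k \<le> sylv n"
  shows "homog n (\<lambda>j. if j = j0 then monom z k else 0) =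
    Poly_Mapping.single (hexpo n j0 k (nat (wt n (j0 @ [k])))) z"
proof -
  have "(\<Sum>a\<le>sylv n. Poly_Mapping.single (hexpo n j0 a (nat (wt n (j0 @ [a])))) (coeff (monom z k) a)) =
      (\<Sum>a\<le>sylv n. if a = k then Poly_Mapping.single (hexpo n j0 a (nat (wt n (j0 @ [a])))) z else 0)"
    by (intro sum.cong) (auto simp: coeff_monom)
  then show ?thesis
    using assms by (simp add: homog_at)
qed

lemma Var_power_sylv_eq_homog:
  "Var n ^ sylv n = homog n (\<lambda>j. if j = zeros n then monom 1 (sylv n) else 0)"
proof -
  have "hexpo n (zeros n) (sylv n) 0 = Poly_Mapping.single n (sylv n)"
    by (simp add: hexpo_def expo_def)
  then show ?thesis
    by (simp add: homog_monom zeros_in_Jset wt_zeros_snoc_sylv Var_power)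
qed

lemma monomial_eq_homog:
  assumes "i \<in> Iset n"
  shows "Const z * (\<Prod>k\<le>n. Var k ^ (i ! k)) * Var (Suc n) ^ nat (wt n i) =
    homog n (\<lambda>j. if j = butlast i then monom z (last i) else 0)"
proof -
  have i: "i = butlast i @ [last i]" and "butlast i \<in> Jset n" "last i \<le> sylv n"
    using Iset_butlast_last[OF assms] by auto
  moreover have "(\<Prod>k\<le>n. Var k ^ (i ! k)) = Poly_Mapping.single (hexpo n (butlast i) (last i) 0) 1"
    using length_Iset[OF assms] by (simp add: prod_Var_power sum_single_nth_eq_hexpo)
  ultimately show ?thesis
    by (simp add: homog_monom Var_power mult_single Const_mult_single hexpo_def flip: i)
qed

lemma TT_eq_sum_monom:
  assumes "j \<in> Jset n"
  shows "TT n u j = (if j = zeros n then monom 1 (sylv n) else 0)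
    + (\<Sum>i\<in>Iset n. if j = butlast i then monom (u i) (last i) else 0)"
proof (rule poly_eqI)
  fix a
  have "(\<Sum>i\<in>Iset n. coeff (if j = butlast i then monom (u i) (last i) else 0) a) =
      (\<Sum>i\<in>Iset n. if i = j @ [a] then u i else 0)"
  proof (intro sum.cong refl)
    fix i assume "i \<in> Iset n"
    then have "j = butlast i \<and> a = last i \<longleftrightarrow> i = j @ [a]"
      using length_Iset[of i n] by (cases i rule: rev_cases) auto
    then show "coeff (if j = butlast i then monom (u i) (last i) else 0) a = (if i = j @ [a] then u i else 0)"
      by (auto simp: coeff_monom)
  qed
  then show "coeff (TT n u j) a = coeff ((if j = zeros n then monom 1 (sylv n) else 0)
      + (\<Sum>i\<in>Iset n. if j = butlast i then monom (u i) (last i) else 0)) a"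
    using finite_Iset by (simp add: coeff_TT[OF assms] coeff_sum sum.delta coeff_monom add.commute)
qed

lemma FF_eq_homog_TT: "FF n u = (\<Sum>k<n. Var k ^ sylv k) + homog n (TT n u)"
proof -
  have "homog n (TT n u) = Var n ^ sylv n +
      (\<Sum>i\<in>Iset n. homog n (\<lambda>j. if j = butlast i then monom (u i) (last i) else 0))"
    by (simp add: homog_cong[OF TT_eq_sum_monom] homog_add homog_sum finite_Iset Var_power_sylv_eq_homog)
  moreover have "(\<Sum>i\<in>Iset n. Const (u i) * (\<Prod>k\<le>n. Var k ^ (i ! k)) * Var (Suc n) ^ nat (wt n i)) =
      (\<Sum>i\<in>Iset n. homog n (\<lambda>j. if j = butlast i then monom (u i) (last i) else 0))"
    by (intro sum.cong refl monomial_eq_homog)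
  ultimately show ?thesis
    unfolding FF_def by (simp add: lessThan_Suc_atMost[symmetric] add.assoc)
qed

lemma binomial_expansion:
  "(Var n - Const c * Var (Suc n) ^ D) ^ w =
    (\<Sum>a\<le>w. Poly_Mapping.single (Poly_Mapping.single n a + Poly_Mapping.single (Suc n) (D * (w - a)))
      (of_nat (w choose a) * (-c) ^ (w - a)))"
proof -
  let ?X = "Poly_Mapping.single (Poly_Mapping.single (Suc n) D) (-c)"
  have X_power: "?X ^ k = Poly_Mapping.single (Poly_Mapping.single (Suc n) (D * k)) ((-c) ^ k)" for k
    by (induction k) (simp_all add: mult_single single_add[symmetric] algebra_simps)
  have "Var n - Const c * Var (Suc n) ^ D = Var n + ?X"
    by (simp add: Var_power Const_mult_single single_uminus)
  then have "(Var n - Const c * Var (Suc n) ^ D) ^ w = (\<Sum>a\<le>w. of_nat (w choose a) * Var n ^ a * ?X ^ (w - a))"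
    by (simp only: binomial_ring)
  also have "\<dots> = (\<Sum>a\<le>w. Poly_Mapping.single 0 (of_nat (w choose a)) * Poly_Mapping.single (Poly_Mapping.single n a) 1
      * Poly_Mapping.single (Poly_Mapping.single (Suc n) (D * (w - a))) ((-c) ^ (w - a)))"
    by (simp only: single_of_nat X_power Var_power)
  finally show ?thesis
    by (simp add: mult_single del: single_of_nat)
qed

lemma monomial_times_binomial_power:
  "Const z * (\<Prod>k<n. Var k ^ (j ! k)) * (Var n - Const c * Var (Suc n) ^ D) ^ w * Var (Suc n) ^ e =
    (\<Sum>a\<le>w. Poly_Mapping.single (hexpo n j a (e + D * (w - a))) (z * of_nat (w choose a) * (-c) ^ (w - a)))"
proof -
  have "(\<Sum>k<n. Poly_Mapping.single k (j ! k)) + (Poly_Mapping.single n a + Poly_Mapping.single (Suc n) x)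
      + Poly_Mapping.single (Suc n) e = hexpo n j a (e + x)" for a x
    by (simp add: hexpo_def expo_def single_add add_ac)
  moreover have "(\<Prod>k<n. Var k ^ (j ! k)) = Poly_Mapping.single (\<Sum>k<n. Poly_Mapping.single k (j ! k)) 1"
    by (simp add: prod_Var_power)
  ultimately show ?thesis
    unfolding binomial_expansion
    by (simp add: Var_power Const_def sum_distrib_left sum_distrib_right mult_single mult.assoc)
qed

lemma homog_smult_linear_power:
  assumes "j \<in> Jset n" "w \<le> sylv n" "\<And>a. a \<le> w \<Longrightarrow> wt n (j @ [a]) = int e + int D * (int w - int a)"
  shows "Const z * (\<Prod>k<n. Var k ^ (j ! k)) * (Var n - Const c * Var (Suc n) ^ D) ^ w * Var (Suc n) ^ e =
    homog n (\<lambda>j'. if j' = j then smult z ([:-c, 1:] ^ w) else 0)"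
proof -
  let ?term = "\<lambda>a. Poly_Mapping.single (hexpo n j a (nat (wt n (j @ [a])))) (coeff (smult z ([:-c, 1:] ^ w)) a)"
  have "(\<Sum>a\<le>sylv n. ?term a) = (\<Sum>a\<le>w. ?term a)"
    using assms(2) by (intro sum.mono_neutral_right) (auto simp: coeff_eq_0 degree_linear_power)
  also have "\<dots> = (\<Sum>a\<le>w. Poly_Mapping.single (hexpo n j a (e + D * (w - a))) (z * of_nat (w choose a) * (-c) ^ (w - a)))"
  proof (intro sum.cong refl)
    fix a assume "a \<in> {..w}"
    then have "wt n (j @ [a]) = int (e + D * (w - a))"
      using assms(3) by (simp add: of_nat_diff)
    then have "nat (wt n (j @ [a])) = e + D * (w - a)"
      by (simp only: nat_int)
    then show "?term a = Poly_Mapping.single (hexpo n j a (e + D * (w - a))) (z * of_nat (w choose a) * (-c) ^ (w - a))"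
      using \<open>a \<in> {..w}\<close> by (simp add: coeff_linear_poly_power mult.assoc)
  qed
  finally show ?thesis
    by (simp add: homog_at[OF assms(1)] monomial_times_binomial_power)
qed

section \<open>The boundary\<close>

definition bdry_TT :: "nat \<Rightarrow> (nat list \<Rightarrow> complex) \<Rightarrow> complex \<Rightarrow> nat list \<Rightarrow> complex poly" where
  "bdry_TT m t' c j =
     (if j \<in> Iset m then smult (t' j) ([:-c, 1:] ^ nat (wt m j)) else 0)
   + (if j = zeros (Suc m) then [:-c, 1:] ^ sylv (Suc m) else 0)"

lemma degree_bdry_TT_le: "degree (bdry_TT m t' c j) \<le> sylv (Suc m)"
proof -
  have "nat (wt m j) \<le> sylv (Suc m)"
    using wt_le_dd[of m j] by (simp add: sylv_Suc)
  then show ?thesis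
    unfolding bdry_TT_def
    by (intro degree_add_le) (auto simp: degree_linear_power intro: le_trans[OF degree_smult_le])
qed

lemma bdry_lhs_eq_homog:
  fixes m :: nat and c :: complex
  defines "lin \<equiv> Var (Suc m) - Const c * Var (Suc (Suc m)) ^ dd m"
  shows "(\<Sum>k<Suc m. Var k ^ sylv k)
      + (\<Sum>j\<in>Iset m. Const (t' j) * (\<Prod>k<Suc m. Var k ^ (j ! k))
            * lin ^ nat (wt m j) * Var (Suc (Suc m)) ^ nat (wt m j))
      + lin ^ sylv (Suc m)
    = (\<Sum>k<Suc m. Var k ^ sylv k) + homog (Suc m) (bdry_TT m t' c)"
proof -
  let ?l = "[:-c, 1:]"
  have "Const (t' j) * (\<Prod>k<Suc m. Var k ^ (j ! k)) * lin ^ nat (wt m j) * Var (Suc (Suc m)) ^ nat (wt m j)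
      = homog (Suc m) (\<lambda>j'. if j' = j then smult (t' j) (?l ^ nat (wt m j)) else 0)"
    if "j \<in> Iset m" for j
  proof -
    have "int (nat (wt m j)) = wt m j"
      using that Iset_iff by simp
    then show ?thesis
      unfolding lin_def using that wt_le_dd[of m j] Iset_iff
      by (intro homog_smult_linear_power) (simp_all add: wt_snoc length_Iset sylv_Suc)
  qed
  moreover have "lin ^ sylv (Suc m) = homog (Suc m) (\<lambda>j'. if j' = zeros (Suc m) then ?l ^ sylv (Suc m) else 0)"
  proof -
    have "wt (Suc m) (zeros (Suc m) @ [a]) = int 0 + int (dd m) * (int (sylv (Suc m)) - int a)" for a
      by (simp add: wt_snoc wt_zeros sylv_Suc algebra_simps)
    then have "Const 1 * (\<Prod>k<Suc m. Var k ^ (zeros (Suc m) ! k)) * lin ^ sylv (Suc m) * Var (Suc (Suc m)) ^ 0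
        = homog (Suc m) (\<lambda>j'. if j' = zeros (Suc m) then smult 1 (?l ^ sylv (Suc m)) else 0)"
      unfolding lin_def by (intro homog_smult_linear_power zeros_in_Jset order.refl)
    then show ?thesis
      by (simp add: Const_def cong: if_cong)
  qed
  ultimately have "homog (Suc m) (bdry_TT m t' c) =
      (\<Sum>j\<in>Iset m. Const (t' j) * (\<Prod>k<Suc m. Var k ^ (j ! k))
        * lin ^ nat (wt m j) * Var (Suc (Suc m)) ^ nat (wt m j)) + lin ^ sylv (Suc m)"
    unfolding bdry_TT_def
    by (simp add: homog_add finite_Iset sum.delta' flip: homog_sum cong: sum.cong)
  then show ?thesis
    by (simp only: add.assoc)
qed

lemma bdry_identity_iff:
  "bdry_identity (Suc m) t' u \<longleftrightarrow>
    (\<forall>j\<in>Jset (Suc m). TT (Suc m) u j = bdry_TT m t' (t' (zeros (Suc m)) / of_nat (sylv (Suc m))) j)"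
  (is "_ \<longleftrightarrow> (\<forall>j\<in>Jset (Suc m). TT (Suc m) u j = ?B j)")
proof -
  have "bdry_identity (Suc m) t' u \<longleftrightarrow> homog (Suc m) ?B = homog (Suc m) (TT (Suc m) u)"
    unfolding bdry_identity_def Let_def diff_Suc_1 bdry_lhs_eq_homog FF_eq_homog_TT by simp
  also have "\<dots> \<longleftrightarrow> (\<forall>j\<in>Jset (Suc m). TT (Suc m) u j = ?B j)"
    using homog_eqD[of "Suc m" ?B "TT (Suc m) u"] homog_cong[of "Suc m" ?B "TT (Suc m) u"]
      degree_bdry_TT_le degree_TT_le by metis
  finally show ?thesis .
qed

lemma coeff_bdry_TT_scale_zeros:
  "coeff (bdry_TT m (scale m z t') (z ^ dd m * c) (zeros (Suc m))) a =
    z ^ nat (wt (Suc m) (zeros (Suc m) @ [a])) * coeff (bdry_TT m t' c (zeros (Suc m))) a"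
proof (cases "a \<le> sylv (Suc m)")
  case a: True
  let ?d = "dd m" and ?s = "sylv (Suc m)" and ?l = "[:-c, 1:]" and ?z = "zeros (Suc m)"
  have key: "z ^ (?d * (?s - a)) * coeff (?l ^ ?d) a = z ^ ?d * (z ^ (?d * (?d - a)) * coeff (?l ^ ?d) a)"
  proof (cases "a \<le> ?d")
    case True
    then have "?d * (?s - a) = ?d + ?d * (?d - a)"
      by (simp add: sylv_Suc algebra_simps Suc_diff_le)
    then show ?thesis
      by (simp add: power_add)
  qed (simp add: coeff_eq_0 degree_linear_power)
  have "coeff (bdry_TT m t' c ?z) a = t' ?z * coeff (?l ^ ?d) a + coeff (?l ^ ?s) a"
    using zeros_in_Iset by (simp add: bdry_TT_def wt_zeros)
  moreover have "coeff (bdry_TT m (scale m z t') (z ^ ?d * c) ?z) a =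
      z ^ ?d * t' ?z * (z ^ (?d * (?d - a)) * coeff (?l ^ ?d) a) + z ^ (?d * (?s - a)) * coeff (?l ^ ?s) a"
    using zeros_in_Iset by (simp add: bdry_TT_def scale_def wt_zeros coeff_linear_power_scale)
  ultimately show ?thesis
    using nat_wt_zeros_snoc[OF a] key
    by (simp only:) (simp only: distrib_left mult.assoc mult.left_commute[of "z ^ _" "t' _"])
next
  case False
  then show ?thesis
    using zeros_in_Iset by (simp add: bdry_TT_def coeff_eq_0 degree_linear_power sylv_Suc wt_zeros)
qed

lemma coeff_bdry_TT_scale:
  "coeff (bdry_TT m (scale m z t') (z ^ dd m * c) j) a =
    z ^ nat (wt (Suc m) (j @ [a])) * coeff (bdry_TT m t' c j) a"
proof -
  let ?w = "nat (wt m j)" and ?l = "[:-c, 1:]"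
  consider "j = zeros (Suc m)" | "j \<notin> Iset m" | "j \<in> Iset m" "j \<noteq> zeros (Suc m)" "a \<le> ?w"
    | "j \<in> Iset m" "j \<noteq> zeros (Suc m)" "?w < a"
    by linarith
  then show ?thesis
  proof cases
    case 1
    then show ?thesis
      by (simp add: coeff_bdry_TT_scale_zeros)
  next
    case 2
    then have "j \<noteq> zeros (Suc m)"
      using zeros_in_Iset by blast
    with 2 show ?thesis
      by (simp add: bdry_TT_def)
  next
    case 3
    have "coeff (bdry_TT m (scale m z t') (z ^ dd m * c) j) a =
        z ^ ?w * t' j * (z ^ (dd m * (?w - a)) * coeff (?l ^ ?w) a)"
      using 3 by (simp add: bdry_TT_def scale_def coeff_linear_power_scale)
    moreover have "coeff (bdry_TT m t' c j) a = t' j * coeff (?l ^ ?w) a"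
      using 3 by (simp add: bdry_TT_def)
    ultimately show ?thesis
      using nat_wt_snoc[of j m a] 3 by (simp add: power_add ac_simps)
  next
    case 4
    then show ?thesis
      by (simp add: bdry_TT_def coeff_eq_0 degree_linear_power)
  qed
qed

lemma TT_scale_eq_bdry_TT:
  assumes "j \<in> Jset (Suc m)" "TT (Suc m) u j = bdry_TT m t' c j"
  shows "TT (Suc m) (scale (Suc m) z u) j = bdry_TT m (scale m z t') (z ^ dd m * c) j"
  using assms by (intro poly_eqI) (simp add: coeff_TT_scale coeff_bdry_TT_scale)

lemma bdry_identity_scale:
  assumes "bdry_identity (Suc m) t' u"
  shows "bdry_identity (Suc m) (scale m z t') (scale (Suc m) z u)"
proof -
  have "scale m z t' (zeros (Suc m)) / of_nat (sylv (Suc m)) = z ^ dd m * (t' (zeros (Suc m)) / of_nat (sylv (Suc m)))"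
    by (simp add: scale_def wt_zeros)
  then show ?thesis
    using assms TT_scale_eq_bdry_TT unfolding bdry_identity_iff by metis
qed

lemma bdry_identity_if_in_boundary:
  assumes "in_boundary (Suc m) t"
  obtains t' where "bdry_identity (Suc m) t' t"
  using assms bdry_identity_scale unfolding in_boundary_def diff_Suc_1 by metis

lemma in_boundary_if_bdry_identity:
  assumes "nonzero_param m t'" "param (Suc m) t" "bdry_identity (Suc m) t' t"
  shows "in_boundary (Suc m) t"
  unfolding in_boundary_def using assms by (intro exI[of _ t'] exI[of _ t] exI[of _ 1]) (simp add: scale_def)

lemma dvd_TT_if_bdry_identity:
  assumes "bdry_identity (Suc m) t' t" "j \<in> Iset m"
  shows "[:-(t' (zeros (Suc m)) / of_nat (sylv (Suc m))), 1:] ^ nat (wt m j) dvd TT (Suc m) t j"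
proof -
  let ?l = "[:-(t' (zeros (Suc m)) / of_nat (sylv (Suc m))), 1:]"
  have "TT (Suc m) t j = bdry_TT m t' (t' (zeros (Suc m)) / of_nat (sylv (Suc m))) j"
    using assms bdry_identity_iff Iset_iff by blast
  then have T: "TT (Suc m) t j = smult (t' j) (?l ^ nat (wt m j)) + (if j = zeros (Suc m) then ?l ^ sylv (Suc m) else 0)"
    using assms(2) by (simp add: bdry_TT_def)
  have "?l ^ nat (wt m j) dvd ?l ^ sylv (Suc m)"
    using wt_le_dd[of m j] by (intro le_imp_power_dvd) (simp add: sylv_Suc)
  then show ?thesis
    unfolding T by (intro dvd_add dvd_smult) auto
qed

lemma ex_nonzero_if_bdry_identity:
  assumes t: "nonzero_param (Suc m) t" and "bdry_identity (Suc m) t' t"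
  shows "\<exists>j\<in>Iset m. t' j \<noteq> 0"
proof (rule ccontr)
  assume "\<not> (\<exists>j\<in>Iset m. t' j \<noteq> 0)"
  then have t'_0: "t' j = 0" if "j \<in> Iset m" for j
    using that by blast
  have "coeff (TT (Suc m) t j) a = 0" if "j \<in> Jset (Suc m)" "a < sylv (Suc m)" for j a
    using assms(2) that t'_0 t'_0[OF zeros_in_Iset]
    by (simp add: bdry_identity_iff bdry_TT_def coeff_linear_poly_power)
  then have "t i = 0" for i
    using t param_eq_0_if_coeffs_TT_vanish unfolding nonzero_param_def by blast
  then show False
    using t unfolding nonzero_param_def by blast
qed

lemma bdry_identity_if_dvd_TT:
  assumes t: "nonzero_param (Suc m) t"
    and dvd: "\<And>j. j \<in> Iset m \<Longrightarrow> [:-c, 1:] ^ nat (wt m j) dvd TT (Suc m) t j"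
  obtains t' where "nonzero_param m t'" "bdry_identity (Suc m) t' t"
proof -
  let ?T = "TT (Suc m) t" and ?z = "zeros (Suc m)" and ?s = "sylv (Suc m)"
  \<comment> \<open>\<open>t' (zeros (Suc m)) = s c\<close> is forced by the boundary identity; the other values are the
    leading coefficients of the \<open>T j\<close>\<close>
  define t' where "t' j = (if j \<in> Iset m then if j = ?z then of_nat ?s * c else coeff (?T j) (nat (wt m j)) else 0)"
    for j
  have c_eq: "t' ?z / of_nat ?s = c"
    using zeros_in_Iset sylv_pos[of "Suc m"] by (simp add: t'_def)
  have T: "?T j = bdry_TT m t' c j" if "j \<in> Jset (Suc m)" for j
  proof (cases "j \<in> Iset m")
    case False
    then show ?thesis
      using that TT_eq_0_if_notin_Iset zeros_in_Iset by (auto simp: bdry_TT_def)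
  next
    case True
    show ?thesis
    proof (cases "j = ?z")
      case True
      have "?T ?z = [:-c, 1:] ^ Suc (dd m) + smult (of_nat (Suc (dd m)) * c) ([:-c, 1:] ^ dd m)"
        using dvd[OF zeros_in_Iset] TT_zeros_monic[of m t]
        by (intro eq_linear_power_if_dvd_monic) (simp_all add: wt_zeros sylv_Suc)
      then show ?thesis
        using True zeros_in_Iset by (simp add: bdry_TT_def t'_def wt_zeros sylv_Suc add.commute)
    next
      case False
      then show ?thesis
        using \<open>j \<in> Iset m\<close> eq_smult_linear_power_if_dvd[OF dvd degree_TT_le_wt]
        by (simp add: bdry_TT_def t'_def)
    qed
  qed
  have bdry: "bdry_identity (Suc m) t' t"
    using T c_eq by (simp add: bdry_identity_iff)
  moreover have "nonzero_param m t'"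
    using ex_nonzero_if_bdry_identity[OF t bdry]
    unfolding nonzero_param_def param_def t'_def by simp
  ultimately show ?thesis
    using that by blast
qed

lemma ex_one_le_minvalbar_iff_in_boundary:
  assumes t: "nonzero_param (Suc m) t"
  shows "(\<exists>c. 1 \<le> minvalbar (Suc m) t c) \<longleftrightarrow> in_boundary (Suc m) t"
proof
  assume "\<exists>c. 1 \<le> minvalbar (Suc m) t c"
  then obtain c where "\<forall>j\<in>Iset m. [:-c, 1:] ^ nat (wt m j) dvd TT (Suc m) t j"
    unfolding one_le_minvalbar_iff by blast
  then obtain t' where "nonzero_param m t'" "bdry_identity (Suc m) t' t"
    using bdry_identity_if_dvd_TT[OF t] by blast
  then show "in_boundary (Suc m) t"
    using t in_boundary_if_bdry_identity unfolding nonzero_param_def by blast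
next
  assume "in_boundary (Suc m) t"
  then obtain t' where "bdry_identity (Suc m) t' t"
    by (rule bdry_identity_if_in_boundary)
  then show "\<exists>c. 1 \<le> minvalbar (Suc m) t c"
    unfolding one_le_minvalbar_iff using dvd_TT_if_bdry_identity by blast
qed

theorem lemma4p5:
  fixes n :: nat and t :: "nat list \<Rightarrow> complex"
  assumes "n \<ge> 1"
    and "nonzero_param n t"
  shows "(\<forall>c. minvalbar n t c \<le> 1) \<and> ((\<exists>c. minvalbar n t c = 1) \<longleftrightarrow> in_boundary n t)"
proof -
  obtain m where n: "n = Suc m"
    using assms(1) by (cases n) auto
  have t: "nonzero_param (Suc m) t"
    using assms(2) n by simp
  have le_1: "minvalbar (Suc m) t c \<le> 1" for c
    using minvalbar_le_1[OF t] .
  then have "minvalbar (Suc m) t c = 1 \<longleftrightarrow> 1 \<le> minvalbar (Suc m) t c" for c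
    by (metis order_antisym order_refl)
  then show ?thesis
    using le_1 ex_one_le_minvalbar_iff_in_boundary[OF t] n by simp
qed

end
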